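(* Let $A$ be an infinitesimal Hopf algebra with counit $\varepsilon$ and antipode $S$. Then: (1) For all $a,b\in A$, $S(ab)=\varepsilon(a)S(b)+\varepsilon(b)S(a)-\varepsilon(a)\varepsilon(b)1$. In particular $S(ab)=0$ whenever $\varepsilon(a)=\varepsilon(b)=0$. (2) For all $a\in A$, $\Delta(S(a))=S(a)\otimes 1+1\otimes S(a)-\varepsilon(a)1\otimes 1$. In particular, if $\varepsilon(a)=0$ then $S(a)$ is primitive, i.e. $\Delta(S(a))=S(a)\otimes 1+1\otimes S(a)$.
   Context: An infinitesimal bialgebra over a field $K$ is a $K$-vector space $A$ that is an associative unital algebra (product $m$, unit $1$) and a coassociative counital coalgebra (coproduct $\Delta$, counit $\varepsilon$) such that for all $a,b\in A$: $\Delta(ab)=\Delta(a)(1\otimes b)+(a\otimes 1)\Delta(b)-a\otimes b$. On the space $\mathcal{L}(A)$ of linear endomorphisms of $A$, the convolution product is $f\star g=m\circ(f\otimes g)\circ\Delta$, with unit $\nu\circ\varepsilon$, where $\nu(\lambda)=\lambda 1$. $A$ is an infinitesimal Hopf algebra if $\mathrm{Id}_A$ has an inverse $S$ for $\star$; $S$ is called the antipode. *)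

theory Defs
  imports Main "HOL.Vector_Spaces"
begin

text \<open>Elements of A \<otimes> A (resp. A \<otimes> A \<otimes> A) are represented by finite lists of
  pairs (resp. triples) standing for sums of elementary tensors.  Over a field K,
  two such sums represent the same tensor iff they agree under every K-bilinear
  (resp. trilinear) form; this is used as tensor equality.\<close>

definition bilinear_form :: "('k::field \<Rightarrow> 'a::ab_group_add \<Rightarrow> 'a) \<Rightarrow> ('a \<Rightarrow> 'a \<Rightarrow> 'k) \<Rightarrow> bool" where
  "bilinear_form scale \<beta> \<longleftrightarrow>
     (\<forall>x. Vector_Spaces.linear scale (*) (\<beta> x)) \<and>
     (\<forall>y. Vector_Spaces.linear scale (*) (\<lambda>x. \<beta> x y))"

definition trilinear_form :: "('k::field \<Rightarrow> 'a::ab_group_add \<Rightarrow> 'a) \<Rightarrow> ('a \<Rightarrow> 'a \<Rightarrow> 'a \<Rightarrow> 'k) \<Rightarrow> bool" where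
  "trilinear_form scale \<tau> \<longleftrightarrow>
     (\<forall>x y. Vector_Spaces.linear scale (*) (\<tau> x y)) \<and>
     (\<forall>x z. Vector_Spaces.linear scale (*) (\<lambda>y. \<tau> x y z)) \<and>
     (\<forall>y z. Vector_Spaces.linear scale (*) (\<lambda>x. \<tau> x y z))"

definition tens_eq2 :: "('k::field \<Rightarrow> 'a::ab_group_add \<Rightarrow> 'a) \<Rightarrow> ('a \<times> 'a) list \<Rightarrow> ('a \<times> 'a) list \<Rightarrow> bool" where
  "tens_eq2 scale s t \<longleftrightarrow>
     (\<forall>\<beta>. bilinear_form scale \<beta> \<longrightarrow>
        sum_list (map (\<lambda>(x, y). \<beta> x y) s) = sum_list (map (\<lambda>(x, y). \<beta> x y) t))"

definition tens_eq3 :: "('k::field \<Rightarrow> 'a::ab_group_add \<Rightarrow> 'a) \<Rightarrow> ('a \<times> 'a \<times> 'a) list \<Rightarrow> ('a \<times> 'a \<times> 'a) list \<Rightarrow> bool" where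
  "tens_eq3 scale s t \<longleftrightarrow>
     (\<forall>\<tau>. trilinear_form scale \<tau> \<longrightarrow>
        sum_list (map (\<lambda>(x, y, z). \<tau> x y z) s) = sum_list (map (\<lambda>(x, y, z). \<tau> x y z) t))"

definition conv :: "('a \<Rightarrow> ('a \<times> 'a) list) \<Rightarrow> ('a \<Rightarrow> 'a::ring_1) \<Rightarrow> ('a \<Rightarrow> 'a) \<Rightarrow> 'a \<Rightarrow> 'a" where
  "conv Delta f g a = sum_list (map (\<lambda>(x, y). f x * g y) (Delta a))"

locale inf_bialgebra = vector_space scale
  for scale :: "'k::field \<Rightarrow> 'a::ring_1 \<Rightarrow> 'a" +
  fixes Delta :: "'a \<Rightarrow> ('a \<times> 'a) list"
    and eps :: "'a \<Rightarrow> 'k"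
  assumes scale_mult_left: "scale c (a * b) = scale c a * b"
    and scale_mult_right: "scale c (a * b) = a * scale c b"
    and Delta_add: "tens_eq2 scale (Delta (a + b)) (Delta a @ Delta b)"
    and Delta_scale: "tens_eq2 scale (Delta (scale c a)) (map (\<lambda>(x, y). (scale c x, y)) (Delta a))"
    and eps_linear: "Vector_Spaces.linear scale (*) eps"
    and coassoc: "tens_eq3 scale
        (concat (map (\<lambda>(x, y). map (\<lambda>(p, q). (p, q, y)) (Delta x)) (Delta a)))
        (concat (map (\<lambda>(x, y). map (\<lambda>(p, q). (x, p, q)) (Delta y)) (Delta a)))"
    and counit_left: "sum_list (map (\<lambda>(x, y). scale (eps x) y) (Delta a)) = a"
    and counit_right: "sum_list (map (\<lambda>(x, y). scale (eps y) x) (Delta a)) = a"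
    and infinitesimal: "tens_eq2 scale (Delta (a * b))
        (map (\<lambda>(x, y). (x, y * b)) (Delta a) @ map (\<lambda>(x, y). (a * x, y)) (Delta b) @ [(- a, b)])"

locale inf_hopf = inf_bialgebra scale Delta eps
  for scale :: "'k::field \<Rightarrow> 'a::ring_1 \<Rightarrow> 'a" and Delta eps +
  fixes S :: "'a \<Rightarrow> 'a"
  assumes S_linear: "Vector_Spaces.linear scale scale S"
    and antipode_right: "conv Delta id S = (\<lambda>a. scale (eps a) 1)"
    and antipode_left: "conv Delta S id = (\<lambda>a. scale (eps a) 1)"

end

theory Submission
  imports Defs
begin

text \<open>Write \<open>\<Delta> a = a\<^sub>1 \<otimes> a\<^sub>2\<close>. Applying the right antipode identity to \<open>y b\<close> and expanding
  \<open>\<Delta>(y b)\<close> by the infinitesimal rule gives \<open>y\<^sub>1 S(y\<^sub>2 b) = \<epsilon>(y)\<epsilon>(b) 1 - \<epsilon>(b) y + y S(b)\<close>.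
  By the counit, the left antipode identity and coassociativity,
  \<open>S(a b) = \<epsilon>(a\<^sub>1) S(a\<^sub>2 b) = S(a\<^sub>1) a\<^sub>2 S(a\<^sub>3 b)\<close>, and inserting the previous formula yields
  part (1). In the same way, expanding \<open>\<Delta>(y\<^sub>1 S(y\<^sub>2)) = \<epsilon>(y) \<Delta>(1) = \<epsilon>(y) 1 \<otimes> 1\<close> by the
  infinitesimal rule gives \<open>y\<^sub>1 \<Delta>(S y\<^sub>2) = \<epsilon>(y) 1 \<otimes> 1 - y \<otimes> 1 + y\<^sub>1 \<otimes> S(y\<^sub>2)\<close>, and
  \<open>\<Delta>(S a) = S(a\<^sub>1) a\<^sub>2 \<Delta>(S a\<^sub>3)\<close> then yields part (2).

  Since tensors are only tested against scalar bilinear forms, identities with values in \<open>A\<close>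
  are obtained by separating vectors with linear functionals.\<close>

lemma vector_space_field_mult: "vector_space ((*) :: 'k::field \<Rightarrow> 'k \<Rightarrow> 'k)"
  by unfold_locales (simp_all add: algebra_simps)

lemmas linear_map_add = module_hom.add[OF module_hom_linearI]
  and linear_map_scale = module_hom.scale[OF module_hom_linearI]
  and linear_map_zero = module_hom.zero[OF module_hom_linearI]
  and linear_map_neg = module_hom.neg[OF module_hom_linearI]
  and linear_map_diff = module_hom.diff[OF module_hom_linearI]

lemma linear_map_sum_list:
  assumes "Vector_Spaces.linear s1 s2 f"
  shows "f (sum_list (map g xs)) = sum_list (map (\<lambda>x. f (g x)) xs)"
  by (induction xs) (simp_all add: linear_map_add[OF assms] linear_map_zero[OF assms])

lemma linear_map_compose:
  "Vector_Spaces.linear s1 s2 f \<Longrightarrow> Vector_Spaces.linear s2 s3 g \<Longrightarrow>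
    Vector_Spaces.linear s1 s3 (\<lambda>x. g (f x))"
  using Vector_Spaces.linear_compose[of s1 s2 f s3 g] by (simp add: comp_def)

lemma (in vector_space_pair) linear_compose_sum_list:
  "(\<And>x. x \<in> set xs \<Longrightarrow> Vector_Spaces.linear s1 s2 (f x)) \<Longrightarrow>
    Vector_Spaces.linear s1 s2 (\<lambda>u. sum_list (map (\<lambda>x. f x u) xs))"
  by (induction xs) (simp_all add: linear_zero linear_compose_add)

lemma (in vector_space) linear_functionals_separate:
  assumes "\<And>\<phi>. Vector_Spaces.linear scale (*) \<phi> \<Longrightarrow> \<phi> x = \<phi> y"
  shows "x = y"
proof (rule ccontr)
  assume "x \<noteq> y"
  then have indep: "independent {x - y}" by simp
  define B where "B = extend_basis {x - y}"
  have B: "independent B" "span B = UNIV" "x - y \<in> B"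
    using independent_extend_basis[OF indep] span_extend_basis[OF indep] extend_basis_superset[OF indep]
    by (auto simp: B_def)
  \<comment> \<open>the coordinate of \<open>x - y\<close> in a basis containing it separates \<open>x\<close> from \<open>y\<close>\<close>
  define \<phi> where "\<phi> v = representation B v (x - y)" for v
  have lin: "Vector_Spaces.linear scale (*) \<phi>"
    unfolding \<phi>_def using B by (intro linear_representation)
  have "\<phi> x - \<phi> y = \<phi> (x - y)"
    by (rule linear_map_diff[OF lin, symmetric])
  also have "\<dots> = 1"
    using B by (simp add: \<phi>_def representation_basis)
  finally have "\<phi> x - \<phi> y = 1" .
  with assms[OF lin] show False by simp
qed

definition bilinear_map ::
    "('k::field \<Rightarrow> 'a::ab_group_add \<Rightarrow> 'a) \<Rightarrow> ('k \<Rightarrow> 'b::ab_group_add \<Rightarrow> 'b) \<Rightarrow> ('a \<Rightarrow> 'a \<Rightarrow> 'b) \<Rightarrow> bool" where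
  "bilinear_map s1 s2 f \<longleftrightarrow>
     (\<forall>x. Vector_Spaces.linear s1 s2 (f x)) \<and> (\<forall>y. Vector_Spaces.linear s1 s2 (\<lambda>x. f x y))"

definition trilinear_map ::
    "('k::field \<Rightarrow> 'a::ab_group_add \<Rightarrow> 'a) \<Rightarrow> ('k \<Rightarrow> 'b::ab_group_add \<Rightarrow> 'b) \<Rightarrow> ('a \<Rightarrow> 'a \<Rightarrow> 'a \<Rightarrow> 'b) \<Rightarrow> bool" where
  "trilinear_map s1 s2 f \<longleftrightarrow>
     (\<forall>x y. Vector_Spaces.linear s1 s2 (f x y)) \<and>
     (\<forall>x z. Vector_Spaces.linear s1 s2 (\<lambda>y. f x y z)) \<and>
     (\<forall>y z. Vector_Spaces.linear s1 s2 (\<lambda>x. f x y z))"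

lemma bilinear_form_eq_bilinear_map: "bilinear_form s = bilinear_map s (*)"
  by (simp add: fun_eq_iff bilinear_form_def bilinear_map_def)

lemma trilinear_form_eq_trilinear_map: "trilinear_form s = trilinear_map s (*)"
  by (simp add: fun_eq_iff trilinear_form_def trilinear_map_def)

lemma bilinear_mapI:
  assumes "vector_space s1" "vector_space s2"
    and "\<And>x x' y. f (x + x') y = f x y + f x' y" "\<And>c x y. f (s1 c x) y = s2 c (f x y)"
    and "\<And>x y y'. f x (y + y') = f x y + f x y'" "\<And>c x y. f x (s1 c y) = s2 c (f x y)"
  shows "bilinear_map s1 s2 f"
  using assms by (simp add: bilinear_map_def linear_iff)

lemma trilinear_mapI:
  assumes "vector_space s1" "vector_space s2"
    and "\<And>x x' y z. f (x + x') y z = f x y z + f x' y z" "\<And>c x y z. f (s1 c x) y z = s2 c (f x y z)"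
    and "\<And>x y y' z. f x (y + y') z = f x y z + f x y' z" "\<And>c x y z. f x (s1 c y) z = s2 c (f x y z)"
    and "\<And>x y z z'. f x y (z + z') = f x y z + f x y z'" "\<And>c x y z. f x y (s1 c z) = s2 c (f x y z)"
  shows "trilinear_map s1 s2 f"
  using assms by (simp add: trilinear_map_def linear_iff)

lemma bilinear_map_linear_left: "bilinear_map s1 s2 f \<Longrightarrow> Vector_Spaces.linear s1 s2 (\<lambda>x. f x y)"
  and bilinear_map_linear_right: "bilinear_map s1 s2 f \<Longrightarrow> Vector_Spaces.linear s1 s2 (f x)"
  by (simp_all add: bilinear_map_def)

lemmas bilinear_map_add_left = linear_map_add[OF bilinear_map_linear_left]
  and bilinear_map_add_right = linear_map_add[OF bilinear_map_linear_right]
  and bilinear_map_scale_left = linear_map_scale[OF bilinear_map_linear_left]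
  and bilinear_map_scale_right = linear_map_scale[OF bilinear_map_linear_right]
  and bilinear_map_neg_left = linear_map_neg[OF bilinear_map_linear_left]
  and bilinear_map_zero_left = linear_map_zero[OF bilinear_map_linear_left]

lemma bilinear_map_compose:
  "bilinear_map s1 s2 f \<Longrightarrow> Vector_Spaces.linear s2 s3 g \<Longrightarrow> bilinear_map s1 s3 (\<lambda>x y. g (f x y))"
  by (auto simp: bilinear_map_def intro: linear_map_compose[where g = g])

lemma trilinear_map_compose:
  "trilinear_map s1 s2 f \<Longrightarrow> Vector_Spaces.linear s2 s3 g \<Longrightarrow> trilinear_map s1 s3 (\<lambda>x y z. g (f x y z))"
  unfolding trilinear_map_def
  by (intro conjI allI; rule linear_map_compose[of s1 s2 _ s3 g]) simp_all

lemma bilinear_map_compose_left: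
  "bilinear_map s1 s2 f \<Longrightarrow> Vector_Spaces.linear s1 s1 g \<Longrightarrow> bilinear_map s1 s2 (\<lambda>x y. f (g x) y)"
  unfolding bilinear_map_def by (auto intro: linear_map_compose[of s1 s1 g s2])

lemma tens_eq2_bilinear_map:
  assumes "tens_eq2 s1 s t" "bilinear_map s1 s2 f" "vector_space s2"
  shows "sum_list (map (\<lambda>(x, y). f x y) s) = sum_list (map (\<lambda>(x, y). f x y) t)"
proof (rule vector_space.linear_functionals_separate[OF assms(3)])
  fix \<phi> assume \<phi>: "Vector_Spaces.linear s2 (*) \<phi>"
  then have "bilinear_form s1 (\<lambda>x y. \<phi> (f x y))"
    using bilinear_map_compose[OF assms(2)] by (simp add: bilinear_form_eq_bilinear_map)
  then have "sum_list (map (\<lambda>(x, y). \<phi> (f x y)) s) = sum_list (map (\<lambda>(x, y). \<phi> (f x y)) t)"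
    using assms(1) unfolding tens_eq2_def by blast
  then show "\<phi> (sum_list (map (\<lambda>(x, y). f x y) s)) = \<phi> (sum_list (map (\<lambda>(x, y). f x y) t))"
    by (simp add: linear_map_sum_list[OF \<phi>] split_def)
qed

lemma tens_eq3_trilinear_map:
  assumes "tens_eq3 s1 s t" "trilinear_map s1 s2 f" "vector_space s2"
  shows "sum_list (map (\<lambda>(x, y, z). f x y z) s) = sum_list (map (\<lambda>(x, y, z). f x y z) t)"
proof (rule vector_space.linear_functionals_separate[OF assms(3)])
  fix \<phi> assume \<phi>: "Vector_Spaces.linear s2 (*) \<phi>"
  then have "trilinear_form s1 (\<lambda>x y z. \<phi> (f x y z))"
    using trilinear_map_compose[OF assms(2)] by (simp add: trilinear_form_eq_trilinear_map)
  then have "sum_list (map (\<lambda>(x, y, z). \<phi> (f x y z)) s) = sum_list (map (\<lambda>(x, y, z). \<phi> (f x y z)) t)"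
    using assms(1) unfolding tens_eq3_def by blast
  then show "\<phi> (sum_list (map (\<lambda>(x, y, z). f x y z) s)) = \<phi> (sum_list (map (\<lambda>(x, y, z). f x y z) t))"
    by (simp add: linear_map_sum_list[OF \<phi>] split_def)
qed

lemma sum_list_concat: "sum_list (concat xss) = sum_list (map sum_list (xss :: 'a::monoid_add list list))"
  by (induction xss) simp_all

context inf_bialgebra
begin

text \<open>\<open>eval_Delta f a\<close> is the image of \<open>\<Delta> a\<close> under the linear map on \<open>A \<otimes> A\<close> induced by \<open>f\<close>.\<close>

definition eval_Delta :: "('a \<Rightarrow> 'a \<Rightarrow> 'b::ab_group_add) \<Rightarrow> 'a \<Rightarrow> 'b" where
  "eval_Delta f a = sum_list (map (\<lambda>(x, y). f x y) (Delta a))"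

lemma linear_map_eval_Delta:
  "Vector_Spaces.linear s2 s3 h \<Longrightarrow> h (eval_Delta f a) = eval_Delta (\<lambda>x y. h (f x y)) a"
  by (simp add: eval_Delta_def linear_map_sum_list split_def)

lemma eval_Delta_add: "eval_Delta (\<lambda>x y. f x y + g x y) a = eval_Delta f a + eval_Delta g a"
  by (simp add: eval_Delta_def split_def sum_list_addf)

lemma eval_Delta_diff: "eval_Delta (\<lambda>x y. f x y - g x y) a = eval_Delta f a - eval_Delta g a"
  by (simp add: eval_Delta_def split_def sum_list_subtractf)

lemma eval_Delta_counit_left: "eval_Delta (\<lambda>x y. scale (eps x) y) a = a"
  and eval_Delta_counit_right: "eval_Delta (\<lambda>x y. scale (eps y) x) a = a"
  using counit_left counit_right by (simp_all add: eval_Delta_def)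

lemma linear_mult_left: "Vector_Spaces.linear scale scale (\<lambda>x. a * x)"
  and linear_mult_right: "Vector_Spaces.linear scale scale (\<lambda>x. x * a)"
  by (simp_all add: linear_iff vector_space_axioms distrib_left distrib_right
      flip: scale_mult_left scale_mult_right)

lemma linear_eval_Delta:
  assumes "vector_space s2" "bilinear_map scale s2 f"
  shows "Vector_Spaces.linear scale s2 (eval_Delta f)"
proof -
  have "eval_Delta f (a + b) = eval_Delta f a + eval_Delta f b" for a b
    using tens_eq2_bilinear_map[OF Delta_add assms(2,1)] by (simp add: eval_Delta_def)
  moreover have "eval_Delta f (scale c a) = s2 c (eval_Delta f a)" for c a
  proof -
    have "eval_Delta f (scale c a) = eval_Delta (\<lambda>x y. s2 c (f x y)) a"
      using tens_eq2_bilinear_map[OF Delta_scale assms(2,1)]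
      by (simp add: eval_Delta_def split_def comp_def bilinear_map_scale_left[OF assms(2)])
    also have "\<dots> = s2 c (eval_Delta f a)"
      by (rule linear_map_eval_Delta[OF vector_space.linear_scale_self[OF assms(1)], symmetric])
    finally show ?thesis .
  qed
  ultimately show ?thesis
    using assms(1) vector_space_axioms by (simp add: linear_iff)
qed

lemma linear_eval_Delta_family:
  assumes "vector_space s2" "\<And>x y. Vector_Spaces.linear scale s2 (\<lambda>u. f u x y)"
  shows "Vector_Spaces.linear scale s2 (\<lambda>u. eval_Delta (f u) a)"
proof -
  interpret vector_space_pair scale s2
    by (intro vector_space_pair.intro vector_space_axioms assms(1))
  show ?thesis
    unfolding eval_Delta_def split_def by (rule linear_compose_sum_list) (use assms(2) in blast)
qed

lemma eval_Delta_mult: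
  assumes "vector_space s2" "bilinear_map scale s2 f"
  shows "eval_Delta f (a * b) = eval_Delta (\<lambda>x y. f x (y * b)) a + eval_Delta (\<lambda>x y. f (a * x) y) b - f a b"
  using tens_eq2_bilinear_map[OF infinitesimal assms(2,1)]
  by (simp add: eval_Delta_def split_def comp_def bilinear_map_neg_left[OF assms(2)])

lemma eval_Delta_coassoc:
  assumes "vector_space s2" "trilinear_map scale s2 f"
  shows "eval_Delta (\<lambda>x y. eval_Delta (\<lambda>p q. f p q y) x) a = eval_Delta (\<lambda>x y. eval_Delta (\<lambda>p q. f x p q) y) a"
  using tens_eq3_trilinear_map[OF coassoc assms(2,1)]
  by (simp add: eval_Delta_def split_def comp_def map_concat sum_list_concat)

lemma eval_Delta_one:
  assumes "vector_space s2" "bilinear_map scale s2 f"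
  shows "eval_Delta f 1 = f 1 1"
  using eval_Delta_mult[OF assms, of 1 1] by simp

lemma eval_Delta_eps_eps: "eval_Delta (\<lambda>x y. eps x * eps y) a = eps a"
  using linear_map_eval_Delta[OF eps_linear, of "\<lambda>x y. scale (eps x) y" a]
  by (simp add: eval_Delta_counit_left linear_map_scale[OF eps_linear])

lemma eps_mult: "eps (a * b) = eps a * eps b"
proof -
  have bil: "bilinear_map scale (*) (\<lambda>x y. eps x * eps y)"
    by (rule bilinear_mapI)
      (simp_all add: vector_space_axioms vector_space_field_mult algebra_simps
        linear_map_add[OF eps_linear] linear_map_scale[OF eps_linear])
  have left: "eval_Delta (\<lambda>x y. eps x * eps (y * b)) a = eps (a * b)"
    using linear_map_eval_Delta[OF linear_map_compose[OF linear_mult_right[of b] eps_linear],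
        of "\<lambda>x y. scale (eps x) y" a]
    by (simp add: eval_Delta_counit_left scale_mult_left[symmetric] linear_map_scale[OF eps_linear])
  have right: "eval_Delta (\<lambda>x y. eps (a * x) * eps y) b = eps (a * b)"
    using linear_map_eval_Delta[OF linear_map_compose[OF linear_mult_left[of a] eps_linear],
        of "\<lambda>x y. scale (eps y) x" b]
    by (simp add: eval_Delta_counit_right scale_mult_right[symmetric] linear_map_scale[OF eps_linear]
        mult.commute)
  show ?thesis
    using eval_Delta_mult[OF vector_space_field_mult bil, of a b]
    by (simp add: eval_Delta_eps_eps left right)
qed

end

context inf_hopf
begin

lemma eval_Delta_id_S: "eval_Delta (\<lambda>x y. x * S y) a = scale (eps a) 1"
  and eval_Delta_S_id: "eval_Delta (\<lambda>x y. S x * y) a = scale (eps a) 1"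
  using fun_cong[OF antipode_right, of a] fun_cong[OF antipode_left, of a]
  by (simp_all add: conv_def eval_Delta_def)

text \<open>\<open>y\<^sub>1 S(y\<^sub>2 b)\<close>: the right antipode identity for \<open>y b\<close>, expanded by the infinitesimal rule.\<close>

lemma eval_Delta_mult_S_mult:
  "eval_Delta (\<lambda>x y. x * S (y * b)) c = scale (eps c * eps b) 1 - scale (eps b) c + c * S b"
proof -
  have bil: "bilinear_map scale scale (\<lambda>x y. x * S y)"
    by (rule bilinear_mapI)
      (simp_all add: vector_space_axioms distrib_left distrib_right linear_map_add[OF S_linear]
        linear_map_scale[OF S_linear] flip: scale_mult_left scale_mult_right)
  have "eval_Delta (\<lambda>x y. c * x * S y) b = scale (eps b) c"
    using linear_map_eval_Delta[OF linear_mult_left, of c "\<lambda>x y. x * S y" b]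
    by (simp add: eval_Delta_id_S mult.assoc flip: scale_mult_right)
  then show ?thesis
    using eval_Delta_mult[OF vector_space_axioms bil, of c b]
    by (simp add: eval_Delta_id_S eps_mult algebra_simps)
qed

lemma antipode_mult:
  "S (a * b) = scale (eps a) (S b) + scale (eps b) (S a) - scale (eps a * eps b) 1"
proof -
  have tril: "trilinear_map scale scale (\<lambda>p q y. S p * q * S (y * b))"
    by (rule trilinear_mapI)
      (simp_all add: vector_space_axioms distrib_left distrib_right linear_map_add[OF S_linear]
        linear_map_scale[OF S_linear] flip: scale_mult_left scale_mult_right)
  have antipode_factor: "S (scale (eps x) y * b) = eval_Delta (\<lambda>p q. S p * q * S (y * b)) x" for x y
    using linear_map_eval_Delta[OF linear_mult_right[of "S (y * b)"], of "\<lambda>p q. S p * q" x]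
    by (simp add: eval_Delta_S_id linear_map_scale[OF S_linear] flip: scale_mult_left)
  have "S (a * b) = eval_Delta (\<lambda>x y. S (scale (eps x) y * b)) a"
    using linear_map_eval_Delta[OF linear_map_compose[OF linear_mult_right[of b] S_linear],
        of "\<lambda>x y. scale (eps x) y" a]
    by (simp add: eval_Delta_counit_left)
  also have "\<dots> = eval_Delta (\<lambda>x y. eval_Delta (\<lambda>p q. S p * q * S (y * b)) x) a"
    by (simp add: antipode_factor)
  also have "\<dots> = eval_Delta (\<lambda>x y. eval_Delta (\<lambda>p q. S x * p * S (q * b)) y) a"
    by (rule eval_Delta_coassoc[OF vector_space_axioms tril])
  also have "\<dots> = eval_Delta (\<lambda>x y. S x * eval_Delta (\<lambda>p q. p * S (q * b)) y) a"
    using linear_map_eval_Delta[OF linear_mult_left] by (simp add: mult.assoc)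
  also have "\<dots> = eval_Delta (\<lambda>x y. scale (eps b) (scale (eps y) (S x))
      - scale (eps b) (S x * y) + S x * y * S b) a"
    by (simp add: eval_Delta_mult_S_mult algebra_simps flip: scale_mult_right)
  also have "\<dots> = scale (eps b) (S a) - scale (eps b) (scale (eps a) 1) + scale (eps a) 1 * S b"
  proof -
    have "eval_Delta (\<lambda>x y. scale (eps y) (S x)) a = S a"
      using linear_map_eval_Delta[OF S_linear, of "\<lambda>x y. scale (eps y) x" a]
      by (simp add: eval_Delta_counit_right linear_map_scale[OF S_linear])
    moreover have "eval_Delta (\<lambda>x y. scale (eps b) (S x * y)) a = scale (eps b) (scale (eps a) 1)"
      using linear_map_eval_Delta[OF linear_scale_self[of "eps b"], of "\<lambda>x y. S x * y" a]
      by (simp add: eval_Delta_S_id)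
    moreover have "eval_Delta (\<lambda>x y. S x * y * S b) a = scale (eps a) 1 * S b"
      using linear_map_eval_Delta[OF linear_mult_right[of "S b"], of "\<lambda>x y. S x * y" a]
      by (simp add: eval_Delta_S_id)
    ultimately show ?thesis
      using linear_map_eval_Delta[OF linear_scale_self[of "eps b"], of "\<lambda>x y. scale (eps y) (S x)" a]
      by (simp add: eval_Delta_add eval_Delta_diff)
  qed
  finally show ?thesis
    by (simp add: algebra_simps flip: scale_mult_left)
qed

text \<open>\<open>y\<^sub>1 \<Delta>(S y\<^sub>2)\<close>, tested against \<open>\<rho>\<close>: expand \<open>\<Delta>(y\<^sub>1 S y\<^sub>2) = \<epsilon>(y) 1 \<otimes> 1\<close> by the
  infinitesimal rule.\<close>

lemma eval_Delta_mult_Delta_S: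
  assumes rho: "bilinear_map scale (*) \<rho>"
  shows "eval_Delta (\<lambda>p q. eval_Delta (\<lambda>u v. \<rho> (p * u) v) (S q)) y
    = eps y * \<rho> 1 1 - \<rho> y 1 + eval_Delta (\<lambda>p q. \<rho> p (S q)) y"
proof -
  note K = vector_space_field_mult
  have lin: "Vector_Spaces.linear scale (*) (eval_Delta \<rho>)"
    by (rule linear_eval_Delta[OF K rho])
  have tril: "trilinear_map scale (*) (\<lambda>u v q. \<rho> u (v * S q))"
    by (rule trilinear_mapI)
      (simp_all add: vector_space_axioms K distrib_right linear_map_add[OF S_linear]
        linear_map_scale[OF S_linear] bilinear_map_add_left[OF rho] bilinear_map_add_right[OF rho]
        bilinear_map_scale_left[OF rho] bilinear_map_scale_right[OF rho] distrib_left
        flip: scale_mult_left scale_mult_right)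
  have coassoc_term: "eval_Delta (\<lambda>p q. eval_Delta (\<lambda>u v. \<rho> u (v * S q)) p) y = \<rho> y 1"
  proof -
    have "eval_Delta (\<lambda>p q. eval_Delta (\<lambda>u v. \<rho> u (v * S q)) p) y
        = eval_Delta (\<lambda>p q. eval_Delta (\<lambda>u v. \<rho> p (u * S v)) q) y"
      by (rule eval_Delta_coassoc[OF K tril])
    also have "\<dots> = eval_Delta (\<lambda>p q. \<rho> (scale (eps q) p) 1) y"
      by (simp add: linear_map_eval_Delta[OF bilinear_map_linear_right[OF rho], symmetric]
          eval_Delta_id_S bilinear_map_scale_left[OF rho] bilinear_map_scale_right[OF rho])
    also have "\<dots> = \<rho> y 1"
      using linear_map_eval_Delta[OF bilinear_map_linear_left[OF rho], of "\<lambda>p q. scale (eps q) p" y]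
      by (simp add: eval_Delta_counit_right)
    finally show ?thesis .
  qed
  have "eps y * \<rho> 1 1 = eval_Delta \<rho> (scale (eps y) 1)"
    by (simp add: linear_map_scale[OF lin] eval_Delta_one[OF K rho])
  also have "\<dots> = eval_Delta (\<lambda>p q. eval_Delta \<rho> (p * S q)) y"
    using linear_map_eval_Delta[OF lin, of "\<lambda>p q. p * S q" y] by (simp add: eval_Delta_id_S)
  also have "\<dots> = \<rho> y 1 + eval_Delta (\<lambda>p q. eval_Delta (\<lambda>u v. \<rho> (p * u) v) (S q)) y
      - eval_Delta (\<lambda>p q. \<rho> p (S q)) y"
    by (simp add: eval_Delta_mult[OF K rho] eval_Delta_add eval_Delta_diff coassoc_term)
  finally show ?thesis by (simp add: algebra_simps)
qed

lemma eval_Delta_S_mult_S: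
  assumes beta: "bilinear_map scale (*) \<beta>"
  shows "eval_Delta (\<lambda>x y. eval_Delta (\<lambda>p q. \<beta> (S x * p) (S q)) y) a = \<beta> 1 (S a)"
proof -
  have tril: "trilinear_map scale (*) (\<lambda>x p q. \<beta> (S x * p) (S q))"
    by (rule trilinear_mapI)
      (simp_all add: vector_space_axioms vector_space_field_mult distrib_left distrib_right
        linear_map_add[OF S_linear] linear_map_scale[OF S_linear]
        bilinear_map_add_left[OF beta] bilinear_map_add_right[OF beta]
        bilinear_map_scale_left[OF beta] bilinear_map_scale_right[OF beta]
        flip: scale_mult_left scale_mult_right)
  have "eval_Delta (\<lambda>x y. eval_Delta (\<lambda>p q. \<beta> (S x * p) (S q)) y) a
      = eval_Delta (\<lambda>x y. eval_Delta (\<lambda>p q. \<beta> (S p * q) (S y)) x) a"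
    by (rule eval_Delta_coassoc[OF vector_space_field_mult tril, symmetric])
  also have "\<dots> = eval_Delta (\<lambda>x y. \<beta> 1 (scale (eps x) (S y))) a"
    by (simp add: linear_map_eval_Delta[OF bilinear_map_linear_left[OF beta], symmetric]
        eval_Delta_S_id bilinear_map_scale_left[OF beta] bilinear_map_scale_right[OF beta])
  also have "\<dots> = \<beta> 1 (S a)"
    using linear_map_eval_Delta[OF linear_map_compose[OF S_linear bilinear_map_linear_right[OF beta, of 1]],
        of "\<lambda>x y. scale (eps x) y" a]
    by (simp add: eval_Delta_counit_left linear_map_scale[OF S_linear])
  finally show ?thesis .
qed

lemma bilinear_map_eval_Delta_left_mult_S:
  assumes beta: "bilinear_map scale (*) \<beta>"
  shows "bilinear_map scale (*) (\<lambda>u y. eval_Delta (\<lambda>p q. \<beta> (u * p) q) (S y))"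
  unfolding bilinear_map_def
proof (intro conjI allI)
  fix u y
  show "Vector_Spaces.linear scale (*) (\<lambda>y. eval_Delta (\<lambda>p q. \<beta> (u * p) q) (S y))"
    using linear_eval_Delta[OF vector_space_field_mult bilinear_map_compose_left[OF beta linear_mult_left]]
    by (rule linear_map_compose[OF S_linear])
  show "Vector_Spaces.linear scale (*) (\<lambda>u. eval_Delta (\<lambda>p q. \<beta> (u * p) q) (S y))"
    by (rule linear_eval_Delta_family[OF vector_space_field_mult])
      (rule linear_map_compose[OF linear_mult_right bilinear_map_linear_left[OF beta]])
qed

lemma eval_Delta_antipode:
  assumes beta: "bilinear_map scale (*) \<beta>"
  shows "eval_Delta \<beta> (S a) = \<beta> (S a) 1 + \<beta> 1 (S a) - eps a * \<beta> 1 1"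
proof -
  note K = vector_space_field_mult
  define \<gamma> where "\<gamma> u y = eval_Delta (\<lambda>p q. \<beta> (u * p) q) (S y)" for u y
  have gamma: "bilinear_map scale (*) \<gamma>"
    unfolding \<gamma>_def by (rule bilinear_map_eval_Delta_left_mult_S[OF beta])
  have tril: "trilinear_map scale (*) (\<lambda>p q y. \<gamma> (S p * q) y)"
    by (rule trilinear_mapI)
      (simp_all add: vector_space_axioms K distrib_left distrib_right
        linear_map_add[OF S_linear] linear_map_scale[OF S_linear]
        bilinear_map_add_left[OF gamma] bilinear_map_add_right[OF gamma]
        bilinear_map_scale_left[OF gamma] bilinear_map_scale_right[OF gamma]
        flip: scale_mult_left scale_mult_right)
  have "eval_Delta \<beta> (S a) = eval_Delta (\<lambda>x y. \<gamma> (scale (eps x) 1) y) a"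
    using linear_map_eval_Delta[OF bilinear_map_linear_right[OF gamma, of 1], of "\<lambda>x y. scale (eps x) y" a]
    by (simp add: eval_Delta_counit_left bilinear_map_scale_left[OF gamma]
        bilinear_map_scale_right[OF gamma] \<gamma>_def[of 1])
  also have "\<dots> = eval_Delta (\<lambda>x y. eval_Delta (\<lambda>p q. \<gamma> (S p * q) y) x) a"
    by (simp add: linear_map_eval_Delta[OF bilinear_map_linear_left[OF gamma], symmetric] eval_Delta_S_id)
  also have "\<dots> = eval_Delta (\<lambda>x y. eval_Delta (\<lambda>p q. \<gamma> (S x * p) q) y) a"
    by (rule eval_Delta_coassoc[OF K tril])
  also have "\<dots> = eval_Delta (\<lambda>x y. eps y * \<beta> (S x) 1 - \<beta> (S x * y) 1
      + eval_Delta (\<lambda>p q. \<beta> (S x * p) (S q)) y) a"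
    using eval_Delta_mult_Delta_S[OF bilinear_map_compose_left[OF beta linear_mult_left]] by (simp add: \<gamma>_def mult.assoc)
  also have "\<dots> = \<beta> (S a) 1 - eps a * \<beta> 1 1 + \<beta> 1 (S a)"
  proof -
    have "eval_Delta (\<lambda>x y. eps y * \<beta> (S x) 1) a = \<beta> (S a) 1"
      using linear_map_eval_Delta[OF linear_map_compose[OF S_linear bilinear_map_linear_left[OF beta, of 1]],
          of "\<lambda>x y. scale (eps y) x" a]
      by (simp add: eval_Delta_counit_right linear_map_scale[OF S_linear] bilinear_map_scale_left[OF beta])
    moreover have "eval_Delta (\<lambda>x y. \<beta> (S x * y) 1) a = eps a * \<beta> 1 1"
      using linear_map_eval_Delta[OF bilinear_map_linear_left[OF beta, of 1], of "\<lambda>x y. S x * y" a]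
      by (simp add: eval_Delta_S_id bilinear_map_scale_left[OF beta])
    ultimately show ?thesis
      by (simp add: eval_Delta_add eval_Delta_diff eval_Delta_S_mult_S[OF beta])
  qed
  finally show ?thesis by (simp add: algebra_simps)
qed

lemma Delta_antipode: "tens_eq2 scale (Delta (S a)) [(S a, 1), (1, S a), (- scale (eps a) 1, 1)]"
  unfolding tens_eq2_def bilinear_form_eq_bilinear_map
proof (intro allI impI)
  fix \<beta> :: "'a \<Rightarrow> 'a \<Rightarrow> 'k"
  assume beta: "bilinear_map scale (*) \<beta>"
  show "sum_list (map (\<lambda>(x, y). \<beta> x y) (Delta (S a)))
      = sum_list (map (\<lambda>(x, y). \<beta> x y) [(S a, 1), (1, S a), (- scale (eps a) 1, 1)])"
    using eval_Delta_antipode[OF beta, of a]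
    by (simp add: eval_Delta_def bilinear_map_neg_left[OF beta] bilinear_map_scale_left[OF beta])
qed

end

theorem lemma4:
  fixes scale :: "'k::field \<Rightarrow> 'a::ring_1 \<Rightarrow> 'a"
    and Delta :: "'a \<Rightarrow> ('a \<times> 'a) list"
    and eps :: "'a \<Rightarrow> 'k"
    and S :: "'a \<Rightarrow> 'a"
  assumes "inf_hopf scale Delta eps S"
  shows "(\<forall>a b. S (a * b) = scale (eps a) (S b) + scale (eps b) (S a) - scale (eps a * eps b) 1)
    \<and> (\<forall>a b. eps a = 0 \<and> eps b = 0 \<longrightarrow> S (a * b) = 0)
    \<and> (\<forall>a. tens_eq2 scale (Delta (S a)) [(S a, 1), (1, S a), (- scale (eps a) 1, 1)])
    \<and> (\<forall>a. eps a = 0 \<longrightarrow> tens_eq2 scale (Delta (S a)) [(S a, 1), (1, S a)])"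
proof -
  interpret inf_hopf scale Delta eps S by (rule assms)
  have primitive: "tens_eq2 scale (Delta (S a)) [(S a, 1), (1, S a)]" if "eps a = 0" for a
    using Delta_antipode[of a] that
    by (simp add: tens_eq2_def bilinear_form_eq_bilinear_map bilinear_map_zero_left)
  show ?thesis
    using antipode_mult Delta_antipode primitive by simp
qed

end
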